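(* Let $A$ be a deterministic KAT automaton over $(\Sigma_0,T_0)$, let $\mathfrak{s}$ assign to each $p\in\Sigma_0$ a deterministic KAT automaton $\mathfrak{s}(p)$ over $(\Sigma_1,T_1)$, and let $\mathfrak{t}:T_0\to\mathsf{BA}(T_1)$. Then $L(\mathsf{compose}^{\mathfrak{s}}_{\mathfrak{t}}(A))=\mathrm{apply}^{\mathfrak{s}'}_{\mathfrak{t}}(L(A))$, where $\mathfrak{s}'(p)=L(\mathfrak{s}(p))$.
   Context: Atoms $\mathsf{At}_T=2^T$; $\mathsf{BA}(T)$ Boolean expressions over $T$; $\alpha\le b$ means $b$ holds under the assignment making exactly the tests in $\alpha$ true. Guarded strings: words in $\mathsf{At}_T(\Sigma\mathsf{At}_T)^*$; $w'\alpha\diamond\alpha x'=w'\alpha x'$. Deterministic KAT automaton over $(\Sigma,T)$: $A=(Q,\delta,\iota)$, $Q$ finite, $\delta:Q\times\mathsf{At}_T\to\{\mathsf{accept},\mathsf{reject}\}+\Sigma\times Q$, $\iota:\mathsf{At}_T\to\{\mathsf{accept},\mathsf{reject}\}+\Sigma\times Q$. $L_A(\gamma)$ is the smallest set with $\gamma(\alpha)=\mathsf{accept}\Rightarrow\alpha\in L_A(\gamma)$ and $\gamma(\alpha)=(p,q)$, $w\in L_A(\delta(q,-))\Rightarrow\alpha pw\in L_A(\gamma)$; $L(A)=L_A(\iota)$. Language substitution: $\beta\in\mathsf{At}_{T_1}$ is $\mathfrak{t}$-consistent with $\alpha\in\mathsf{At}_{T_0}$ if $\alpha\le t\iff\beta\le\mathfrak{t}(t)$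 for all $t\in T_0$; $\mathrm{apply}_{\mathfrak{t}}(L)=\{\beta_0p_0\cdots p_{n-1}\beta_n:\exists\alpha_0p_0\cdots p_{n-1}\alpha_n\in L$ with each $\beta_i$ $\mathfrak{t}$-consistent with $\alpha_i\}$; for $L$ over $(\Sigma_0,T_1)$ and $\mathfrak{s}'$ mapping $\Sigma_0$ to guarded languages over $(\Sigma_1,T_1)$, $\mathrm{apply}^{\mathfrak{s}'}(L)=\{\alpha_0\diamond w_0\diamond\alpha_1\diamond\cdots\diamond w_{n-1}\diamond\alpha_n:\alpha_0p_0\cdots p_{n-1}\alpha_n\in L,\ w_i\in\mathfrak{s}'(p_i)\}$; $\mathrm{apply}^{\mathfrak{s}'}_{\mathfrak{t}}=\mathrm{apply}^{\mathfrak{s}'}\circ\mathrm{apply}_{\mathfrak{t}}$. Automata composition. (1) $\mathsf{compose}_{\mathfrak{t}}(A)$ for $A=(Q,\delta,\iota)$ over $(\Sigma,T_0)$: with $\mathfrak{t}^{-1}(\beta)\in\mathsf{At}_{T_0}$ the atom such that $t\in\mathfrak{t}^{-1}(\beta)$ iff $\beta\le\mathfrak{t}(t)$, it is $(Q,\delta',\iota')$ over $(\Sigma,T_1)$ with $\delta'(q,\beta)=\delta(q,\mathfrak{t}^{-1}(\beta))$, $\iota'(\beta)=\iota(\mathfrak{t}^{-1}(\beta))$. (2) For $A=(Q,\delta,\iota)$ over $(\Sigma_0,T)$ and $\mathfrak{s}(p)=(Q_p,\delta_p,\iota_p)$ over $(\Sigma_1,T)$: $\hat\delta(q,\alpha)=\mathsf{accept}$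 if $\delta(q,\alpha)=\mathsf{accept}$; $=(p,q')$ if $\delta(q,\alpha)=(p,q')$ and $\iota_p(\alpha)\ne\mathsf{accept}$; $=\hat\delta(q',\alpha)$ if $\delta(q,\alpha)=(p,q')$ and $\iota_p(\alpha)=\mathsf{accept}$; $=\mathsf{reject}$ otherwise (including when the recursion does not terminate). $\hat\iota(\alpha)=\hat\delta(q,\alpha)$ if $\iota(\alpha)=(p,q)$ and $\iota_p(\alpha)=\mathsf{accept}$, else $\iota(\alpha)$. $\mathsf{compose}^{\mathfrak{s}}(A)=(Q',\delta',\iota')$ over $(\Sigma_1,T)$ with $Q'=\sum_{p\in\Sigma_0}Q_p\times Q$ and, for $q_p\in Q_p$, $q\in Q$: $\delta'((q_p,q),\alpha)=(p'',(q_p',q))$ if $\delta_p(q_p,\alpha)=(p'',q_p')$; $=(p'',(q_{p'},q'))$ if $\delta_p(q_p,\alpha)=\mathsf{accept}$, $\hat\delta(q,\alpha)=(p',q')$ and $\iota_{p'}(\alpha)=(p'',q_{p'})$; $=\mathsf{accept}$ if $\delta_p(q_p,\alpha)=\mathsf{accept}$ and $\hat\delta(q,\alpha)=\mathsf{accept}$; $=\mathsf{reject}$ otherwise; $\iota'(\alpha)=\mathsf{accept}$ if $\hat\iota(\alpha)=\mathsf{accept}$; $=(p'',(q_{p'},q))$ if $\hat\iota(\alpha)=(p',q)$ and $\iota_{p'}(\alpha)=(p'',q_{p'})$; $=\mathsf{reject}$ otherwise. (3) $\mathsf{compose}^{\mathfrak{s}}_{\mathfrak{t}}(A)=\mathsf{compose}^{\mathfrak{s}}(\mathsf{compose}_{\mathfrak{t}}(A))$.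 *)

theory Defs
  imports Main
begin

datatype 't bexp = BTrue | BFalse | BTest 't | BNot "'t bexp"
  | BAnd "'t bexp" "'t bexp" | BOr "'t bexp" "'t bexp"

text \<open>An atom over T is a subset of T (the tests assigned true); the test type is finite.
  atom_le a b means that b holds under the assignment a.\<close>
fun atom_le :: "'t set \<Rightarrow> 't bexp \<Rightarrow> bool" where
  "atom_le a BTrue = True"
| "atom_le a BFalse = False"
| "atom_le a (BTest t) = (t \<in> a)"
| "atom_le a (BNot b) = (\<not> atom_le a b)"
| "atom_le a (BAnd b c) = (atom_le a b \<and> atom_le a c)"
| "atom_le a (BOr b c) = (atom_le a b \<or> atom_le a c)"

text \<open>Guarded string alpha_0 p_0 alpha_1 ... p_(n-1) alpha_n, represented as
  (alpha_0, [(p_0, alpha_1), ..., (p_(n-1), alpha_n)]).\<close>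
type_synonym ('p, 't) gstring = "'t set \<times> ('p \<times> 't set) list"

definition last_atom :: "('p, 't) gstring \<Rightarrow> 't set" where
  "last_atom w = (if snd w = [] then fst w else snd (last (snd w)))"

definition gs_diamond :: "('p, 't) gstring \<Rightarrow> ('p, 't) gstring \<Rightarrow> ('p, 't) gstring option" where
  "gs_diamond w v = (if last_atom w = fst v then Some (fst w, snd w @ snd v) else None)"

datatype ('p, 'q) res = Accept | Reject | Step 'p 'q

text \<open>A deterministic KAT automaton with (finite) state type 'q: the pair (delta, iota).\<close>
type_synonym ('q, 'p, 't) kat_aut =
  "('q \<Rightarrow> 't set \<Rightarrow> ('p, 'q) res) \<times> ('t set \<Rightarrow> ('p, 'q) res)"

inductive lang_from :: "('q \<Rightarrow> 't set \<Rightarrow> ('p, 'q) res) \<Rightarrow> ('t set \<Rightarrow> ('p, 'q) res)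
    \<Rightarrow> ('p, 't) gstring \<Rightarrow> bool" for \<delta> where
  acc: "\<gamma> \<alpha> = Accept \<Longrightarrow> lang_from \<delta> \<gamma> (\<alpha>, [])"
| step: "\<gamma> \<alpha> = Step p q \<Longrightarrow> lang_from \<delta> (\<delta> q) w
          \<Longrightarrow> lang_from \<delta> \<gamma> (\<alpha>, (p, fst w) # snd w)"

definition kat_lang :: "('q, 'p, 't) kat_aut \<Rightarrow> ('p, 't) gstring set" where
  "kat_lang A = {w. lang_from (fst A) (snd A) w}"

definition t_consistent :: "('t0 \<Rightarrow> 't1 bexp) \<Rightarrow> 't1 set \<Rightarrow> 't0 set \<Rightarrow> bool" where
  "t_consistent tt \<beta> \<alpha> = (\<forall>t. t \<in> \<alpha> \<longleftrightarrow> atom_le \<beta> (tt t))"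

definition apply_t :: "('t0 \<Rightarrow> 't1 bexp) \<Rightarrow> ('p, 't0) gstring set \<Rightarrow> ('p, 't1) gstring set" where
  "apply_t tt L = {(\<beta>0, ys). \<exists>\<alpha>0 xs. (\<alpha>0, xs) \<in> L \<and> t_consistent tt \<beta>0 \<alpha>0 \<and>
      list_all2 (\<lambda>(p, \<beta>) (p', \<alpha>). p = p' \<and> t_consistent tt \<beta> \<alpha>) ys xs}"

text \<open>subst_rel s' x v: v = alpha_0 <> w_0 <> alpha_1 <> ... <> w_(n-1) <> alpha_n for some
  choice of w_i in s'(p_i), where x = alpha_0 p_0 ... p_(n-1) alpha_n (all products defined).\<close>
inductive subst_rel :: "('p0 \<Rightarrow> ('p1, 't) gstring set) \<Rightarrow> ('p0, 't) gstring
    \<Rightarrow> ('p1, 't) gstring \<Rightarrow> bool" for s' where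
  nil: "subst_rel s' (\<alpha>, []) (\<alpha>, [])"
| cons: "w \<in> s' p \<Longrightarrow> gs_diamond (\<alpha>, []) w = Some w \<Longrightarrow>
         subst_rel s' (\<beta>, xs) v \<Longrightarrow> gs_diamond w v = Some u \<Longrightarrow>
         subst_rel s' (\<alpha>, (p, \<beta>) # xs) u"

definition apply_s :: "('p0 \<Rightarrow> ('p1, 't) gstring set) \<Rightarrow> ('p0, 't) gstring set
    \<Rightarrow> ('p1, 't) gstring set" where
  "apply_s s' L = {v. \<exists>x \<in> L. subst_rel s' x v}"

definition apply_st :: "('p0 \<Rightarrow> ('p1, 't1) gstring set) \<Rightarrow> ('t0 \<Rightarrow> 't1 bexp)
    \<Rightarrow> ('p0, 't0) gstring set \<Rightarrow> ('p1, 't1) gstring set" where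
  "apply_st s' tt L = apply_s s' (apply_t tt L)"

definition t_inv :: "('t0 \<Rightarrow> 't1 bexp) \<Rightarrow> 't1 set \<Rightarrow> 't0 set" where
  "t_inv tt \<beta> = {t. atom_le \<beta> (tt t)}"

definition compose_t :: "('t0 \<Rightarrow> 't1 bexp) \<Rightarrow> ('q, 'p, 't0) kat_aut \<Rightarrow> ('q, 'p, 't1) kat_aut" where
  "compose_t tt A = ((\<lambda>q \<beta>. fst A q (t_inv tt \<beta>)), (\<lambda>\<beta>. snd A (t_inv tt \<beta>)))"

text \<open>The relation underlying delta-hat (least relation; where no result is derivable,
  in particular on non-terminating recursion, delta-hat is reject).\<close>
inductive hat_rel :: "('p0 \<Rightarrow> ('q1, 'p1, 't) kat_aut) \<Rightarrow> ('q0 \<Rightarrow> 't set \<Rightarrow> ('p0, 'q0) res)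
    \<Rightarrow> 'q0 \<Rightarrow> 't set \<Rightarrow> ('p0, 'q0) res \<Rightarrow> bool" for s \<delta> where
  acc: "\<delta> q \<alpha> = Accept \<Longrightarrow> hat_rel s \<delta> q \<alpha> Accept"
| stop: "\<delta> q \<alpha> = Step p q' \<Longrightarrow> snd (s p) \<alpha> \<noteq> Accept \<Longrightarrow> hat_rel s \<delta> q \<alpha> (Step p q')"
| skip: "\<delta> q \<alpha> = Step p q' \<Longrightarrow> snd (s p) \<alpha> = Accept \<Longrightarrow> hat_rel s \<delta> q' \<alpha> r
          \<Longrightarrow> hat_rel s \<delta> q \<alpha> r"

definition delta_hat :: "('p0 \<Rightarrow> ('q1, 'p1, 't) kat_aut) \<Rightarrow> ('q0 \<Rightarrow> 't set \<Rightarrow> ('p0, 'q0) res)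
    \<Rightarrow> 'q0 \<Rightarrow> 't set \<Rightarrow> ('p0, 'q0) res" where
  "delta_hat s \<delta> q \<alpha> = (if \<exists>r. hat_rel s \<delta> q \<alpha> r then (THE r. hat_rel s \<delta> q \<alpha> r) else Reject)"

definition iota_hat :: "('p0 \<Rightarrow> ('q1, 'p1, 't) kat_aut) \<Rightarrow> ('q0, 'p0, 't) kat_aut
    \<Rightarrow> 't set \<Rightarrow> ('p0, 'q0) res" where
  "iota_hat s A \<alpha> = (case snd A \<alpha> of
       Step p q \<Rightarrow> (if snd (s p) \<alpha> = Accept then delta_hat s (fst A) q \<alpha> else snd A \<alpha>)
     | _ \<Rightarrow> snd A \<alpha>)"

text \<open>States of compose^s(A): the sum over p of Q_p x Q, represented as tagged triples
  (p, q_p, q); all s(p) share the (finite) state type 'q1.\<close>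
definition compose_s :: "('p0 \<Rightarrow> ('q1, 'p1, 't) kat_aut) \<Rightarrow> ('q0, 'p0, 't) kat_aut
    \<Rightarrow> ('p0 \<times> 'q1 \<times> 'q0, 'p1, 't) kat_aut" where
  "compose_s s A =
    ((\<lambda>(p, qp, q) \<alpha>. (case fst (s p) qp \<alpha> of
         Step p'' qp' \<Rightarrow> Step p'' (p, qp', q)
       | Accept \<Rightarrow> (case delta_hat s (fst A) q \<alpha> of
             Step p' q' \<Rightarrow> (case snd (s p') \<alpha> of
                 Step p'' qp'' \<Rightarrow> Step p'' (p', qp'', q')
               | _ \<Rightarrow> Reject)
           | Accept \<Rightarrow> Accept
           | Reject \<Rightarrow> Reject)
       | Reject \<Rightarrow> Reject)),
     (\<lambda>\<alpha>. (case iota_hat s A \<alpha> of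
         Accept \<Rightarrow> Accept
       | Step p' q \<Rightarrow> (case snd (s p') \<alpha> of
             Step p'' qp \<Rightarrow> Step p'' (p', qp, q)
           | _ \<Rightarrow> Reject)
       | Reject \<Rightarrow> Reject)))"

definition compose_st :: "('p0 \<Rightarrow> ('q1, 'p1, 't1) kat_aut) \<Rightarrow> ('t0 \<Rightarrow> 't1 bexp)
    \<Rightarrow> ('q0, 'p0, 't0) kat_aut \<Rightarrow> ('p0 \<times> 'q1 \<times> 'q0, 'p1, 't1) kat_aut" where
  "compose_st s tt A = compose_s s (compose_t tt A)"

end

theory Submission
  imports Defs
begin

text \<open>
The test substitution is harmless: compose_t only precomposes the transition functions with
t_inv, and the atoms that are t-consistent with a given atom are exactly its t_inv-preimages,
so running compose_t(A) on a guarded string is running A on its image under t_inv.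

For the action substitution we compare, for every result function \<gamma> of A (its initial function or
a row \<delta> q), the words accepted by compose^s(A) when entered through \<gamma> with the substitution
image of the words accepted by A from \<gamma>. The latter only depends on the first atom \<alpha> through the
hat of \<gamma> at \<alpha>: an action p whose automaton s(p) accepts immediately at \<alpha> contributes the
one-atom word \<alpha> and can be skipped, and if the skipping never stops then no word survives,
matching the reject of delta-hat. After this normalisation the composed automaton runs s(p) from
its initial function and then resumes A, which is exactly the coalesced product w \<diamond> v' with
w \<in> L(s(p)). Since s(p) does not accept immediately, w contains at least one action, so v' is
shorter and induction on the length of the produced word closes the argument.
\<close>

lemma lang_from_Nil_iff [simp]: "lang_from \<delta> \<gamma> (\<alpha>, []) \<longleftrightarrow> \<gamma> \<alpha> = Accept"
  by (auto elim: lang_from.cases intro: lang_from.acc)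

lemma lang_from_Cons_iff [simp]:
  "lang_from \<delta> \<gamma> (\<alpha>, (p, \<beta>) # xs) \<longleftrightarrow> (\<exists>q. \<gamma> \<alpha> = Step p q \<and> lang_from \<delta> (\<delta> q) (\<beta>, xs))"
  by (auto elim: lang_from.cases intro: lang_from.step[where w = "(\<beta>, xs)", simplified])

lemma lang_from_cong: "\<gamma> (fst x) = \<gamma>' (fst x) \<Longrightarrow> lang_from \<delta> \<gamma> x \<longleftrightarrow> lang_from \<delta> \<gamma>' x"
  by (cases x; cases "snd x") auto

lemma lang_from_const_Accept: "lang_from \<delta> (\<lambda>_. Accept) v \<longleftrightarrow> snd v = []"
  by (cases v; cases "snd v") auto

lemma lang_from_const_Reject: "\<not> lang_from \<delta> (\<lambda>_. Reject) v"
  by (cases v; cases "snd v") auto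

lemma kat_lang_accepting_start:
  assumes "snd A \<alpha> = Accept" and "fst w = \<alpha>"
  shows "w \<in> kat_lang A \<longleftrightarrow> w = (\<alpha>, [])"
  using assms by (cases w; cases "snd w") (auto simp: kat_lang_def)

definition map_atoms :: "('a set \<Rightarrow> 'b set) \<Rightarrow> ('p, 'a) gstring \<Rightarrow> ('p, 'b) gstring" where
  "map_atoms f x = (f (fst x), map (\<lambda>(p, \<beta>). (p, f \<beta>)) (snd x))"

lemma lang_from_map_atoms:
  "lang_from (\<lambda>q \<beta>. \<delta> q (f \<beta>)) (\<lambda>\<beta>. \<gamma> (f \<beta>)) x \<longleftrightarrow> lang_from \<delta> \<gamma> (map_atoms f x)"
proof (cases x)
  case (Pair \<alpha> xs)
  show ?thesis
    unfolding Pair map_atoms_def by (induction xs arbitrary: \<alpha> \<gamma>) auto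
qed

lemma t_consistent_iff: "t_consistent tt \<beta> \<alpha> \<longleftrightarrow> \<alpha> = t_inv tt \<beta>"
  by (auto simp: t_consistent_def t_inv_def)

lemma apply_t_eq: "apply_t tt L = {x. map_atoms (t_inv tt) x \<in> L}"
proof -
  have rel_map: "list_all2 (\<lambda>(p, \<beta>) (p', \<alpha>). p = p' \<and> \<alpha> = t_inv tt \<beta>) ys xs
      \<longleftrightarrow> xs = map (\<lambda>(p, \<beta>). (p, t_inv tt \<beta>)) ys" for ys xs
    by (induction ys arbitrary: xs) (auto simp: list_all2_Cons1)
  show ?thesis
    unfolding apply_t_def t_consistent_iff rel_map by (auto simp: map_atoms_def)
qed

lemma lang_compose_t: "kat_lang (compose_t tt A) = apply_t tt (kat_lang A)"
  by (auto simp: kat_lang_def compose_t_def apply_t_eq lang_from_map_atoms)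

lemma gs_diamond_Nil_eq_Some [simp]: "gs_diamond (\<alpha>, []) v = Some u \<longleftrightarrow> fst v = \<alpha> \<and> u = v"
  by (cases v) (auto simp: gs_diamond_def last_atom_def)

lemma gs_diamond_eq_Nil: "gs_diamond w v = Some (\<alpha>, []) \<longleftrightarrow> w = (\<alpha>, []) \<and> v = (\<alpha>, [])"
  by (cases w; cases v) (auto simp: gs_diamond_def last_atom_def)

lemma gs_diamond_Cons:
  "gs_diamond (\<alpha>, (p, \<beta>) # ys) v = map_option (\<lambda>u. (\<alpha>, (p, fst u) # snd u)) (gs_diamond (\<beta>, ys) v)"
  by (simp add: gs_diamond_def last_atom_def)

lemma gs_diamond_eq_Some_iff:
  "gs_diamond w v = Some u \<longleftrightarrow> last_atom w = fst v \<and> u = (fst w, snd w @ snd v)"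
  by (auto simp: gs_diamond_def)

lemma gs_diamond_fst: "gs_diamond w v = Some u \<Longrightarrow> fst w = fst u"
  by (auto simp: gs_diamond_eq_Some_iff)

lemma gs_diamond_lang_from_Nil:
  "(\<exists>w v'. lang_from \<delta> \<gamma> w \<and> P v' \<and> gs_diamond w v' = Some (\<alpha>, [])) \<longleftrightarrow>
    \<gamma> \<alpha> = Accept \<and> P (\<alpha>, [])"
  by (auto simp: gs_diamond_eq_Nil)

lemma gs_diamond_lang_from_Cons:
  "(\<exists>w v'. lang_from \<delta> \<gamma> w \<and> P v' \<and> gs_diamond w v' = Some (\<alpha>, (p, \<beta>) # ys)) \<longleftrightarrow>
    \<gamma> \<alpha> = Accept \<and> P (\<alpha>, (p, \<beta>) # ys) \<or>
    (\<exists>q. \<gamma> \<alpha> = Step p q \<and>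
       (\<exists>w v'. lang_from \<delta> (\<delta> q) w \<and> P v' \<and> gs_diamond w v' = Some (\<beta>, ys)))"
  (is "?L \<longleftrightarrow> ?R")
proof
  assume ?L
  then obtain \<alpha>' ws v' where w: "lang_from \<delta> \<gamma> (\<alpha>', ws)" "P v'"
      "gs_diamond (\<alpha>', ws) v' = Some (\<alpha>, (p, \<beta>) # ys)"
    by auto
  show ?R
  proof (cases ws)
    case Nil
    then show ?thesis using w by auto
  next
    case (Cons y ws')
    then obtain p' \<beta>' where "ws = (p', \<beta>') # ws'" by (cases y) auto
    then show ?thesis
      using w by (auto simp: gs_diamond_Cons simp del: split_paired_Ex split_paired_All)
  qed
next
  assume ?R
  then show ?L
  proof
    assume "\<gamma> \<alpha> = Accept \<and> P (\<alpha>, (p, \<beta>) # ys)"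
    then show ?L by (intro exI[of _ "(\<alpha>, [])"] exI[of _ "(\<alpha>, (p, \<beta>) # ys)"]) simp
  next
    assume "\<exists>q. \<gamma> \<alpha> = Step p q \<and>
       (\<exists>w v'. lang_from \<delta> (\<delta> q) w \<and> P v' \<and> gs_diamond w v' = Some (\<beta>, ys))"
    then obtain q w v' where "\<gamma> \<alpha> = Step p q" "lang_from \<delta> (\<delta> q) w" "P v'"
        "gs_diamond w v' = Some (\<beta>, ys)"
      by blast
    then show ?L
      by (intro exI[of _ "(\<alpha>, (p, fst w) # snd w)"] exI[of _ v']) (simp add: gs_diamond_Cons)
  qed
qed

lemma hat_rel_det: "hat_rel s \<delta> q \<alpha> r \<Longrightarrow> hat_rel s \<delta> q \<alpha> r' \<Longrightarrow> r = r'"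
proof (induction arbitrary: r' rule: hat_rel.induct)
  case (acc q \<alpha>)
  from acc.prems show ?case by (cases rule: hat_rel.cases) (use acc in auto)
next
  case (stop q \<alpha> p q')
  from stop.prems show ?case by (cases rule: hat_rel.cases) (use stop in auto)
next
  case (skip q \<alpha> p q' r)
  from skip.prems show ?case
  proof (cases rule: hat_rel.cases)
    case (skip p'' q'')
    then show ?thesis using skip.hyps(1) skip.IH by simp
  qed (use skip.hyps in simp_all)
qed

lemma delta_hat_eqI:
  assumes "hat_rel s \<delta> q \<alpha> r"
  shows "delta_hat s \<delta> q \<alpha> = r"
proof -
  have "(THE r. hat_rel s \<delta> q \<alpha> r) = r"
    using assms by (blast intro: the_equality hat_rel_det)
  then show ?thesis using assms by (auto simp: delta_hat_def)
qed

lemma hat_rel_not_Reject: "hat_rel s \<delta> q \<alpha> r \<Longrightarrow> r \<noteq> Reject"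
  by (induction rule: hat_rel.induct) simp_all

lemma hat_rel_Step_not_skip: "hat_rel s \<delta> q \<alpha> r \<Longrightarrow> r = Step p q' \<Longrightarrow> snd (s p) \<alpha> \<noteq> Accept"
  by (induction rule: hat_rel.induct) simp_all

lemma hat_rel_delta_hat:
  "delta_hat s \<delta> q \<alpha> \<noteq> Reject \<Longrightarrow> hat_rel s \<delta> q \<alpha> (delta_hat s \<delta> q \<alpha>)"
proof -
  assume "delta_hat s \<delta> q \<alpha> \<noteq> Reject"
  then obtain r where "hat_rel s \<delta> q \<alpha> r"
    by (auto simp: delta_hat_def split: if_splits)
  then show ?thesis by (simp add: delta_hat_eqI)
qed

lemma hat_rel_skip_iff:
  assumes "\<delta> q \<alpha> = Step p q'" and "snd (s p) \<alpha> = Accept"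
  shows "hat_rel s \<delta> q \<alpha> r \<longleftrightarrow> hat_rel s \<delta> q' \<alpha> r"
proof
  assume "hat_rel s \<delta> q \<alpha> r"
  then show "hat_rel s \<delta> q' \<alpha> r" using assms by (cases rule: hat_rel.cases) simp_all
next
  assume "hat_rel s \<delta> q' \<alpha> r"
  with assms show "hat_rel s \<delta> q \<alpha> r" by (rule hat_rel.skip)
qed

definition gamma_hat :: "('p0 \<Rightarrow> ('q1, 'p1, 't) kat_aut) \<Rightarrow> ('q0 \<Rightarrow> 't set \<Rightarrow> ('p0, 'q0) res)
    \<Rightarrow> ('t set \<Rightarrow> ('p0, 'q0) res) \<Rightarrow> 't set \<Rightarrow> ('p0, 'q0) res" where
  "gamma_hat s \<delta> \<gamma> \<alpha> = (case \<gamma> \<alpha> of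
       Step p q \<Rightarrow> (if snd (s p) \<alpha> = Accept then delta_hat s \<delta> q \<alpha> else \<gamma> \<alpha>)
     | _ \<Rightarrow> \<gamma> \<alpha>)"

lemma iota_hat_eq: "iota_hat s A = gamma_hat s (fst A) (snd A)"
  by (auto simp: iota_hat_def gamma_hat_def)

lemma delta_hat_eq: "delta_hat s \<delta> q = gamma_hat s \<delta> (\<delta> q)"
proof
  fix \<alpha>
  show "delta_hat s \<delta> q \<alpha> = gamma_hat s \<delta> (\<delta> q) \<alpha>"
  proof (cases "\<delta> q \<alpha>")
    case Accept
    then show ?thesis by (simp add: gamma_hat_def delta_hat_eqI hat_rel.acc)
  next
    case Reject
    have "\<not> hat_rel s \<delta> q \<alpha> r" for r
    proof
      assume "hat_rel s \<delta> q \<alpha> r"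
      then show False using Reject by (cases rule: hat_rel.cases) simp_all
    qed
    then show ?thesis using Reject by (simp add: gamma_hat_def delta_hat_def)
  next
    case (Step p q')
    show ?thesis
    proof (cases "snd (s p) \<alpha> = Accept")
      case True
      have "hat_rel s \<delta> q \<alpha> = hat_rel s \<delta> q' \<alpha>"
        using hat_rel_skip_iff[of \<delta> q \<alpha> p q' s, OF Step True] by blast
      then show ?thesis using Step True by (simp add: gamma_hat_def delta_hat_def)
    next
      case False
      then show ?thesis using Step by (simp add: gamma_hat_def delta_hat_eqI hat_rel.stop)
    qed
  qed
qed

lemma gamma_hat_Step_not_skip: "gamma_hat s \<delta> \<gamma> \<alpha> = Step p q \<Longrightarrow> snd (s p) \<alpha> \<noteq> Accept"
proof
  assume "gamma_hat s \<delta> \<gamma> \<alpha> = Step p q" and skip: "snd (s p) \<alpha> = Accept"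
  then obtain q' where "delta_hat s \<delta> q' \<alpha> = Step p q"
    by (auto simp: gamma_hat_def split: res.splits if_splits)
  then show False
    using skip hat_rel_Step_not_skip[OF hat_rel_delta_hat, of s \<delta> q' \<alpha>] by simp
qed

lemma subst_rel_Nil_iff [simp]: "subst_rel s' (\<alpha>, []) v \<longleftrightarrow> v = (\<alpha>, [])"
  by (auto elim: subst_rel.cases intro: subst_rel.nil)

lemma subst_rel_Cons_iff:
  "subst_rel s' (\<alpha>, (p, \<beta>) # xs) u \<longleftrightarrow>
    (\<exists>w v. w \<in> s' p \<and> fst w = \<alpha> \<and> subst_rel s' (\<beta>, xs) v \<and> gs_diamond w v = Some u)"
proof
  assume "subst_rel s' (\<alpha>, (p, \<beta>) # xs) u"
  then show "\<exists>w v. w \<in> s' p \<and> fst w = \<alpha> \<and> subst_rel s' (\<beta>, xs) v \<and> gs_diamond w v = Some u"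
    by (cases rule: subst_rel.cases) (force split: if_splits)
qed (auto intro: subst_rel.cons)

lemma subst_rel_fst: "subst_rel s' x v \<Longrightarrow> fst v = fst x"
  by (induction rule: subst_rel.induct) (auto simp: gs_diamond_def split: if_splits)

definition subst_lang :: "('p0 \<Rightarrow> ('q1, 'p1, 't) kat_aut) \<Rightarrow> ('q0 \<Rightarrow> 't set \<Rightarrow> ('p0, 'q0) res)
    \<Rightarrow> ('t set \<Rightarrow> ('p0, 'q0) res) \<Rightarrow> ('p1, 't) gstring set" where
  "subst_lang s \<delta> \<gamma> = apply_s (\<lambda>p. kat_lang (s p)) {x. lang_from \<delta> \<gamma> x}"

lemma subst_lang_iff:
  "v \<in> subst_lang s \<delta> \<gamma> \<longleftrightarrow>
    \<gamma> (fst v) = Accept \<and> snd v = [] \<or>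
    (\<exists>p q w v'. \<gamma> (fst v) = Step p q \<and> w \<in> kat_lang (s p) \<and> fst w = fst v \<and>
       v' \<in> subst_lang s \<delta> (\<delta> q) \<and> gs_diamond w v' = Some v)"
  (is "?L \<longleftrightarrow> ?R")
proof
  assume ?L
  then obtain \<alpha> xs where x: "lang_from \<delta> \<gamma> (\<alpha>, xs)"
    "subst_rel (\<lambda>p. kat_lang (s p)) (\<alpha>, xs) v"
    by (auto simp: subst_lang_def apply_s_def)
  show ?R
  proof (cases xs)
    case Nil
    then show ?thesis using x by simp
  next
    case (Cons y xs')
    obtain p \<beta> where y: "y = (p, \<beta>)" by (cases y)
    obtain q where q: "\<gamma> \<alpha> = Step p q" "lang_from \<delta> (\<delta> q) (\<beta>, xs')"
      using x Cons y by auto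
    obtain w v' where w: "w \<in> kat_lang (s p)" "fst w = \<alpha>" "gs_diamond w v' = Some v"
      and v': "subst_rel (\<lambda>p. kat_lang (s p)) (\<beta>, xs') v'"
      using x Cons y by (auto simp: subst_rel_Cons_iff)
    have "v' \<in> subst_lang s \<delta> (\<delta> q)"
      using q(2) v' by (auto simp: subst_lang_def apply_s_def)
    moreover have "fst v = \<alpha>" using x(2) by (simp add: subst_rel_fst)
    ultimately show ?thesis using q(1) w by blast
  qed
next
  assume ?R
  then show ?L
  proof
    assume "\<gamma> (fst v) = Accept \<and> snd v = []"
    then have "lang_from \<delta> \<gamma> (fst v, [])" "subst_rel (\<lambda>p. kat_lang (s p)) (fst v, []) v"
      by (auto simp: prod_eq_iff)
    then show ?L unfolding subst_lang_def apply_s_def by blast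
  next
    assume "\<exists>p q w v'. \<gamma> (fst v) = Step p q \<and> w \<in> kat_lang (s p) \<and> fst w = fst v \<and>
       v' \<in> subst_lang s \<delta> (\<delta> q) \<and> gs_diamond w v' = Some v"
    then obtain p q w v' \<beta> xs where "\<gamma> (fst v) = Step p q" "w \<in> kat_lang (s p)" "fst w = fst v"
      "lang_from \<delta> (\<delta> q) (\<beta>, xs)" "subst_rel (\<lambda>p. kat_lang (s p)) (\<beta>, xs) v'"
      "gs_diamond w v' = Some v"
      by (auto simp: subst_lang_def apply_s_def)
    then have "lang_from \<delta> \<gamma> (fst v, (p, \<beta>) # xs)"
      "subst_rel (\<lambda>p. kat_lang (s p)) (fst v, (p, \<beta>) # xs) v"
      by (auto simp: subst_rel_Cons_iff simp del: split_paired_Ex)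
    then show ?L unfolding subst_lang_def apply_s_def by blast
  qed
qed

lemma subst_lang_const_Accept: "v \<in> subst_lang s \<delta> (\<lambda>_. Accept) \<longleftrightarrow> snd v = []"
  by (simp add: subst_lang_iff[of v])

lemma subst_lang_const_Reject: "v \<notin> subst_lang s \<delta> (\<lambda>_. Reject)"
  by (simp add: subst_lang_iff[of v])

lemma subst_lang_cong:
  assumes "\<gamma> (fst v) = \<gamma>' (fst v)"
  shows "v \<in> subst_lang s \<delta> \<gamma> \<longleftrightarrow> v \<in> subst_lang s \<delta> \<gamma>'"
  unfolding subst_lang_iff[of v s \<delta> \<gamma>] subst_lang_iff[of v s \<delta> \<gamma>'] assms ..

lemma subst_lang_skip:
  assumes "\<gamma> \<alpha> = Step p q" and "snd (s p) \<alpha> = Accept" and "fst v = \<alpha>"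
  shows "v \<in> subst_lang s \<delta> \<gamma> \<longleftrightarrow> v \<in> subst_lang s \<delta> (\<delta> q)"
proof
  assume "v \<in> subst_lang s \<delta> \<gamma>"
  then obtain w v' where "w \<in> kat_lang (s p)" "fst w = \<alpha>" "v' \<in> subst_lang s \<delta> (\<delta> q)"
      "gs_diamond w v' = Some v"
    using assms(1,3) unfolding subst_lang_iff[of v s \<delta> \<gamma>] by auto
  then show "v \<in> subst_lang s \<delta> (\<delta> q)"
    using kat_lang_accepting_start[OF assms(2)] by auto
next
  assume "v \<in> subst_lang s \<delta> (\<delta> q)"
  moreover have "(\<alpha>, []) \<in> kat_lang (s p)"
    using assms(2) by (simp add: kat_lang_def)
  moreover have "\<gamma> (fst v) = Step p q" "fst (\<alpha>, []) = fst v" "gs_diamond (\<alpha>, []) v = Some v"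
    using assms(1,3) by simp_all
  ultimately show "v \<in> subst_lang s \<delta> \<gamma>"
    unfolding subst_lang_iff[of v s \<delta> \<gamma>] by blast
qed

lemma subst_lang_hat_rel:
  "hat_rel s \<delta> q \<alpha> r \<Longrightarrow> fst v = \<alpha> \<Longrightarrow>
    v \<in> subst_lang s \<delta> (\<delta> q) \<longleftrightarrow> v \<in> subst_lang s \<delta> (\<lambda>_. r)"
proof (induction rule: hat_rel.induct)
  case (skip q \<alpha> p q' r)
  then show ?case using subst_lang_skip[of "\<delta> q" \<alpha> p q' s v \<delta>] by simp
qed (rule subst_lang_cong, simp)+

lemma hat_rel_terminates:
  assumes "lang_from \<delta> \<gamma> x" and "\<gamma> = \<delta> q" and "subst_rel (\<lambda>p. kat_lang (s p)) x v"
  shows "\<exists>r. hat_rel s \<delta> q (fst x) r"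
  using assms
proof (induction arbitrary: q v rule: lang_from.induct)
  case (acc \<gamma> \<alpha>)
  then show ?case by (auto intro: hat_rel.acc)
next
  case (step \<gamma> \<alpha> p q' x')
  show ?case
  proof (cases "snd (s p) \<alpha> = Accept")
    case True
    obtain w v' where "w \<in> kat_lang (s p)" "fst w = \<alpha>" "gs_diamond w v' = Some v"
      and v': "subst_rel (\<lambda>p. kat_lang (s p)) x' v'"
      using step.prems(2) by (simp only: subst_rel_Cons_iff prod.collapse) blast
    then have "fst x' = \<alpha>"
      using True subst_rel_fst[OF v'] by (simp add: kat_lang_accepting_start)
    moreover obtain r where "hat_rel s \<delta> q' (fst x') r"
      using step.IH[OF refl v'] by blast
    ultimately show ?thesis
      using step.hyps(1) step.prems(1) True by (auto intro: hat_rel.skip)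
  next
    case False
    then show ?thesis using step.hyps(1) step.prems(1) by (auto intro: hat_rel.stop)
  qed
qed

lemma subst_lang_delta_hat:
  assumes "fst v = \<alpha>"
  shows "v \<in> subst_lang s \<delta> (\<delta> q) \<longleftrightarrow> v \<in> subst_lang s \<delta> (\<lambda>_. delta_hat s \<delta> q \<alpha>)"
proof (cases "delta_hat s \<delta> q \<alpha> = Reject")
  case True
  have "v \<notin> subst_lang s \<delta> (\<delta> q)"
  proof
    assume "v \<in> subst_lang s \<delta> (\<delta> q)"
    then obtain x where x: "lang_from \<delta> (\<delta> q) x" "subst_rel (\<lambda>p. kat_lang (s p)) x v"
      by (auto simp: subst_lang_def apply_s_def)
    then obtain r where r: "hat_rel s \<delta> q \<alpha> r"
      using hat_rel_terminates[OF x(1) refl x(2)] subst_rel_fst[OF x(2)] assms by auto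
    show False using True delta_hat_eqI[OF r] hat_rel_not_Reject[OF r] by simp
  qed
  moreover have "v \<notin> subst_lang s \<delta> (\<lambda>_. Reject)"
    by (simp add: subst_lang_iff[of v s \<delta>])
  ultimately show ?thesis using True by simp
next
  case False
  show ?thesis by (rule subst_lang_hat_rel[OF hat_rel_delta_hat[OF False] assms])
qed

lemma subst_lang_gamma_hat:
  "v \<in> subst_lang s \<delta> \<gamma> \<longleftrightarrow> v \<in> subst_lang s \<delta> (\<lambda>_. gamma_hat s \<delta> \<gamma> (fst v))"
proof (cases "\<exists>p q. \<gamma> (fst v) = Step p q \<and> snd (s p) (fst v) = Accept")
  case True
  then obtain p q where skip: "\<gamma> (fst v) = Step p q" "snd (s p) (fst v) = Accept"
    by blast
  have "v \<in> subst_lang s \<delta> \<gamma> \<longleftrightarrow> v \<in> subst_lang s \<delta> (\<delta> q)"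
    using skip by (rule subst_lang_skip) simp
  also have "\<dots> \<longleftrightarrow> v \<in> subst_lang s \<delta> (\<lambda>_. delta_hat s \<delta> q (fst v))"
    by (rule subst_lang_delta_hat) simp
  finally show ?thesis using skip by (simp add: gamma_hat_def)
next
  case False
  then have "gamma_hat s \<delta> \<gamma> (fst v) = \<gamma> (fst v)"
    by (auto simp: gamma_hat_def split: res.split)
  then show ?thesis by (intro subst_lang_cong) simp
qed

text \<open>The two clauses of the transition function of compose^s(A): compose_enter handles the
  moment A emits p in state q (start s(p) at the same atom), compose_inside a run of s(p) with A
  paused in state q.\<close>

definition compose_enter :: "('p0 \<Rightarrow> ('q1, 'p1, 't) kat_aut) \<Rightarrow> 't set \<Rightarrow> ('p0, 'q0) res
    \<Rightarrow> ('p1, 'p0 \<times> 'q1 \<times> 'q0) res" where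
  "compose_enter s \<alpha> r = (case r of
       Accept \<Rightarrow> Accept
     | Reject \<Rightarrow> Reject
     | Step p q \<Rightarrow> (case snd (s p) \<alpha> of Step p' qp \<Rightarrow> Step p' (p, qp, q) | _ \<Rightarrow> Reject))"

definition compose_inside :: "('p0 \<Rightarrow> ('q1, 'p1, 't) kat_aut) \<Rightarrow> ('q0 \<Rightarrow> 't set \<Rightarrow> ('p0, 'q0) res)
    \<Rightarrow> 'p0 \<Rightarrow> ('t set \<Rightarrow> ('p1, 'q1) res) \<Rightarrow> 'q0 \<Rightarrow> 't set \<Rightarrow> ('p1, 'p0 \<times> 'q1 \<times> 'q0) res" where
  "compose_inside s \<delta> p \<gamma> q \<alpha> = (case \<gamma> \<alpha> of
       Step p' qp \<Rightarrow> Step p' (p, qp, q)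
     | Accept \<Rightarrow> compose_enter s \<alpha> (delta_hat s \<delta> q \<alpha>)
     | Reject \<Rightarrow> Reject)"

lemma fst_compose_s: "fst (compose_s s A) (p, qp, q) = compose_inside s (fst A) p (fst (s p) qp) q"
  by (auto simp: compose_s_def compose_inside_def compose_enter_def split: res.split)

lemma snd_compose_s:
  "snd (compose_s s A) = (\<lambda>\<alpha>. compose_enter s \<alpha> (gamma_hat s (fst A) (snd A) \<alpha>))"
  by (auto simp: compose_s_def compose_enter_def iota_hat_eq[symmetric] split: res.split)

lemma lang_from_compose_inside:
  "lang_from (fst (compose_s s A)) (compose_inside s (fst A) p \<gamma> q) v \<longleftrightarrow>
    (\<exists>w v'. lang_from (fst (s p)) \<gamma> w \<and>
       lang_from (fst (compose_s s A)) (\<lambda>\<alpha>. compose_enter s \<alpha> (delta_hat s (fst A) q \<alpha>)) v' \<and>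
       gs_diamond w v' = Some v)"
  (is "?L \<gamma> v \<longleftrightarrow> ?R \<gamma> v")
proof (induction "snd v" arbitrary: v \<gamma>)
  case Nil
  then obtain \<alpha> where v: "v = (\<alpha>, [])" by (cases v) auto
  show ?case
    unfolding v gs_diamond_lang_from_Nil by (simp add: compose_inside_def split: res.split)
next
  case (Cons y ys)
  then obtain \<alpha> p' \<beta> where v: "v = (\<alpha>, (p', \<beta>) # ys)" by (cases v; cases y) auto
  have IH: "?L \<gamma>' (\<beta>, ys) \<longleftrightarrow> ?R \<gamma>' (\<beta>, ys)" for \<gamma>'
    using Cons.hyps(1)[of "(\<beta>, ys)"] by simp
  show ?case
    unfolding v gs_diamond_lang_from_Cons
    by (cases "\<gamma> \<alpha>") (auto simp: compose_inside_def fst_compose_s IH)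
qed

lemma lang_from_compose_enter:
  "lang_from (fst (compose_s s A)) (\<lambda>\<alpha>. compose_enter s \<alpha> (gamma_hat s (fst A) \<gamma> \<alpha>)) v \<longleftrightarrow>
    v \<in> subst_lang s (fst A) \<gamma>"
proof (induction "length (snd v)" arbitrary: v \<gamma> rule: less_induct)
  case less
  let ?C = "fst (compose_s s A)"
  define \<alpha> r where "\<alpha> = fst v" and "r = gamma_hat s (fst A) \<gamma> \<alpha>"
  have "lang_from ?C (\<lambda>\<alpha>. compose_enter s \<alpha> (gamma_hat s (fst A) \<gamma> \<alpha>)) v \<longleftrightarrow>
      lang_from ?C (\<lambda>_. compose_enter s \<alpha> r) v"
    by (rule lang_from_cong) (simp add: \<alpha>_def r_def)
  moreover have "v \<in> subst_lang s (fst A) \<gamma> \<longleftrightarrow> v \<in> subst_lang s (fst A) (\<lambda>_. r)"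
    unfolding \<alpha>_def r_def by (rule subst_lang_gamma_hat)
  moreover have "lang_from ?C (\<lambda>_. compose_enter s \<alpha> r) v \<longleftrightarrow> v \<in> subst_lang s (fst A) (\<lambda>_. r)"
  proof (cases r)
    case Accept
    then show ?thesis
      by (simp add: compose_enter_def lang_from_const_Accept subst_lang_const_Accept)
  next
    case Reject
    then show ?thesis
      by (simp add: compose_enter_def lang_from_const_Reject subst_lang_const_Reject)
  next
    case (Step p q)
    have no_skip: "snd (s p) \<alpha> \<noteq> Accept"
      using Step gamma_hat_Step_not_skip unfolding r_def by metis
    have IH: "lang_from ?C (\<lambda>\<alpha>. compose_enter s \<alpha> (delta_hat s (fst A) q \<alpha>)) v'
        \<longleftrightarrow> v' \<in> subst_lang s (fst A) (fst A q)"
      if "lang_from (fst (s p)) (snd (s p)) w" and "gs_diamond w v' = Some v" for w v'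
    proof -
      have "fst w = \<alpha>" using that(2) by (auto simp: \<alpha>_def gs_diamond_eq_Some_iff)
      then have "snd w \<noteq> []" using that(1) no_skip by (cases w) auto
      then have "length (snd v') < length (snd v)"
        using that(2) by (auto simp: gs_diamond_eq_Some_iff)
      then show ?thesis unfolding delta_hat_eq by (rule less.hyps)
    qed
    have "lang_from ?C (\<lambda>_. compose_enter s \<alpha> r) v \<longleftrightarrow>
        lang_from ?C (compose_inside s (fst A) p (snd (s p)) q) v"
      using no_skip unfolding \<alpha>_def
      by (intro lang_from_cong) (simp add: Step compose_enter_def compose_inside_def split: res.split)
    also have "\<dots> \<longleftrightarrow> (\<exists>w v'. lang_from (fst (s p)) (snd (s p)) w \<and>
        lang_from ?C (\<lambda>\<alpha>. compose_enter s \<alpha> (delta_hat s (fst A) q \<alpha>)) v' \<and>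
        gs_diamond w v' = Some v)"
      by (rule lang_from_compose_inside)
    also have "\<dots> \<longleftrightarrow> (\<exists>w v'. w \<in> kat_lang (s p) \<and> fst w = fst v \<and>
        v' \<in> subst_lang s (fst A) (fst A q) \<and> gs_diamond w v' = Some v)"
      using IH gs_diamond_fst[of _ _ v] unfolding kat_lang_def mem_Collect_eq by blast
    also have "\<dots> \<longleftrightarrow> v \<in> subst_lang s (fst A) (\<lambda>_. r)"
      unfolding subst_lang_iff[of v s "fst A" "\<lambda>_. r"] using Step by (simp del: split_paired_Ex)
    finally show ?thesis .
  qed
  ultimately show ?case by simp
qed

lemma lang_compose_s: "kat_lang (compose_s s A) = apply_s (\<lambda>p. kat_lang (s p)) (kat_lang A)"
  using lang_from_compose_enter[of s A "snd A"]
  by (auto simp: kat_lang_def snd_compose_s subst_lang_def)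

theorem proposition6p5:
  fixes A :: "('q0::finite, 'p0::finite, 't0::finite) kat_aut"
    and s :: "'p0 \<Rightarrow> ('q1::finite, 'p1::finite, 't1::finite) kat_aut"
    and tt :: "'t0 \<Rightarrow> 't1 bexp"
  shows "kat_lang (compose_st s tt A) = apply_st (\<lambda>p. kat_lang (s p)) tt (kat_lang A)"
  by (simp add: compose_st_def apply_st_def lang_compose_s lang_compose_t)

end
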